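(* Let $\alpha$ be a nonzero real number. Let $\gamma(t)=\Psi(u(t),v(t))$ be an $\alpha$-stationary curve in $\mathbb H^2$ which is not of constant curvature, parametrized by arc length $t$ and not passing through $N$. Then there is a constant $c>0$ such that, expressing $t$ and $v$ as functions of $u$, $$t(u)=\pm\int^u\frac{s^\alpha\sinh(s)}{\sqrt{s^{2\alpha}\sinh^2(s)-c^2}}\,ds,\qquad v(u)=\pm\int^u\frac{c}{\sinh(s)\sqrt{s^{2\alpha}\sinh^2(s)-c^2}}\,ds.$$
   Context: The hyperbolic plane is $\mathbb H^2=\{(x,y,z):x^2+y^2-z^2=-1,\ z>0\}$ with the metric induced by the Lorentzian inner product $\langle x,y\rangle_\epsilon=x_1y_1+x_2y_2-x_3y_3$. It is parametrized by $\Psi(u,v)=(\sinh u\cos v,\sinh u\sin v,\cosh u)$, and $N=(0,0,1)$. The hyperbolic distance from $\Psi(u,v)$ to $N$ is $u$, and the line element is $\sqrt{u'^2+\sinh^2(u)v'^2}\,dt$. The energy of a curve $\gamma(t)=\Psi(u(t),v(t))$ with $u>0$ is $$E_\alpha[\gamma]=\int u^\alpha\sqrt{u'^2+\sinh^2(u)v'^2}\,dt.$$ The curve is $\alpha$-stationary if it is a critical point of $E_\alpha$, i.e. $(u,v)$ satisfies its Euler–Lagrange equations. Equivalently, its geodesic curvature satisfies $\kappa=\alpha\langle\mathbf n,\xi\rangle_\epsilon/u$, where $\mathbf n$ is the unit normal and $\xi=\Psi_u$. Throughout the paper, $\alpha\ne0$ and curves avoid $N$. Integrals $\int^u$ are indefinite,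 i.e. determined up to additive constants. *)

theory Defs
  imports "HOL-Analysis.Analysis"
begin

definition lor :: "real^3 \<Rightarrow> real^3 \<Rightarrow> real" where
  "lor x y = x$1 * y$1 + x$2 * y$2 - x$3 * y$3"

text \<open>Lorentzian cross product: lor (lcross a b) c = det(a,b,c).\<close>
definition lcross :: "real^3 \<Rightarrow> real^3 \<Rightarrow> real^3" where
  "lcross a b = vector [a$2 * b$3 - a$3 * b$2, a$3 * b$1 - a$1 * b$3, - (a$1 * b$2 - a$2 * b$1)]"

definition Psi :: "real \<Rightarrow> real \<Rightarrow> real^3" where
  "Psi u v = vector [sinh u * cos v, sinh u * sin v, cosh u]"

definition curve :: "(real \<Rightarrow> real) \<Rightarrow> (real \<Rightarrow> real) \<Rightarrow> real \<Rightarrow> real^3" where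
  "curve u v t = Psi (u t) (v t)"

definition tangent :: "(real \<Rightarrow> real) \<Rightarrow> (real \<Rightarrow> real) \<Rightarrow> real \<Rightarrow> real^3" where
  "tangent u v t = vector_derivative (curve u v) (at t)"

definition unit_normal :: "(real \<Rightarrow> real) \<Rightarrow> (real \<Rightarrow> real) \<Rightarrow> real \<Rightarrow> real^3" where
  "unit_normal u v t = lcross (curve u v t) (tangent u v t)"

definition geod_curv :: "(real \<Rightarrow> real) \<Rightarrow> (real \<Rightarrow> real) \<Rightarrow> real \<Rightarrow> real" where
  "geod_curv u v t = lor (vector_derivative (tangent u v) (at t)) (unit_normal u v t)"

definition C2_on :: "real set \<Rightarrow> (real \<Rightarrow> real) \<Rightarrow> bool" where
  "C2_on I f \<longleftrightarrow> (\<forall>t\<in>I. f differentiable (at t) \<and> deriv f differentiable (at t))"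

definition arc_length_on :: "real set \<Rightarrow> (real \<Rightarrow> real) \<Rightarrow> (real \<Rightarrow> real) \<Rightarrow> bool" where
  "arc_length_on I u v \<longleftrightarrow>
     (\<forall>t\<in>I. (deriv u t)\<^sup>2 + (sinh (u t))\<^sup>2 * (deriv v t)\<^sup>2 = 1)"

text \<open>Euler--Lagrange equations of E_alpha with Lagrangian
  L(u,v,p,q) = u^alpha sqrt(p^2 + sinh^2(u) q^2).\<close>
definition speed :: "(real \<Rightarrow> real) \<Rightarrow> (real \<Rightarrow> real) \<Rightarrow> real \<Rightarrow> real" where
  "speed u v t = sqrt ((deriv u t)\<^sup>2 + (sinh (u t))\<^sup>2 * (deriv v t)\<^sup>2)"

definition alpha_stationary ::
  "real \<Rightarrow> real set \<Rightarrow> (real \<Rightarrow> real) \<Rightarrow> (real \<Rightarrow> real) \<Rightarrow> bool" where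
  "alpha_stationary \<alpha> I u v \<longleftrightarrow>
     (\<forall>t\<in>I.
        ((\<lambda>s. u s powr \<alpha> * deriv u s / speed u v s) has_real_derivative
           (\<alpha> * u t powr (\<alpha> - 1) * speed u v t
            + u t powr \<alpha> * sinh (u t) * cosh (u t) * (deriv v t)\<^sup>2 / speed u v t)) (at t)
      \<and> ((\<lambda>s. u s powr \<alpha> * (sinh (u s))\<^sup>2 * deriv v s / speed u v s) has_real_derivative 0) (at t))"

end

theory Submission
  imports Defs
begin

(* The Lagrangian does not depend on v, so that equation says that u^alpha sinh^2(u) v'
   divided by the speed is constant; along an arc-length parametrisation u^alpha sinh^2(u) v' = C.
   If C = 0 then v is constant, the curve runs along a geodesic through N and has curvature 0;
   hence C <> 0 and c = |C|.  Substituting v' into u'^2 + sinh^2(u) v'^2 = 1 gives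
   (u^alpha sinh u)^2 u'^2 = (u^alpha sinh u)^2 - C^2.  On an interval where u' <> 0 its sign is
   constant and u is invertible, and dt/du = 1/u', dv/du = v'/u' are the stated integrands. *)

lemma has_vector_derivative_vector3:
  assumes "(f1 has_real_derivative d1) (at t)" "(f2 has_real_derivative d2) (at t)"
    and "(f3 has_real_derivative d3) (at t)"
  shows "((\<lambda>s. vector [f1 s, f2 s, f3 s] :: real^3) has_vector_derivative vector [d1, d2, d3]) (at t)"
proof -
  have vector3_eq: "(vector [a, b, c] :: real^3) =
      a *\<^sub>R vector [1, 0, 0] + b *\<^sub>R vector [0, 1, 0] + c *\<^sub>R vector [0, 0, 1]" for a b c
    by (simp add: vec_eq_iff forall_3)
  have scaled: "((\<lambda>s. f s *\<^sub>R e) has_vector_derivative d *\<^sub>R e) (at t)"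
    if "(f has_real_derivative d) (at t)" for f d and e :: "real^3"
    using has_vector_derivative_scaleR[OF that has_vector_derivative_const] by simp
  have "((\<lambda>s. f1 s *\<^sub>R vector [1, 0, 0] + f2 s *\<^sub>R vector [0, 1, 0] + f3 s *\<^sub>R vector [0, 0, 1])
      has_vector_derivative
      d1 *\<^sub>R vector [1, 0, 0] + d2 *\<^sub>R vector [0, 1, 0] + d3 *\<^sub>R (vector [0, 0, 1] :: real^3)) (at t)"
    by (intro has_vector_derivative_add scaled assms)
  then show ?thesis
    by (simp only: vector3_eq [symmetric])
qed

lemma curve_has_vector_derivative:
  assumes "(u has_real_derivative du) (at t)" "(v has_real_derivative dv) (at t)"
  shows "(curve u v has_vector_derivative
           vector [du * cosh (u t) * cos (v t) - sinh (u t) * sin (v t) * dv,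
                   du * cosh (u t) * sin (v t) + sinh (u t) * cos (v t) * dv,
                   du * sinh (u t)]) (at t)"
  unfolding curve_def Psi_def
  by (rule has_vector_derivative_vector3; (rule derivative_eq_intros assms refl)+; simp add: algebra_simps)

lemma C2_on_has_real_derivative:
  assumes "C2_on I f" "t \<in> I"
  shows "(f has_real_derivative deriv f t) (at t)"
    and "(deriv f has_real_derivative deriv (deriv f) t) (at t)"
  using assms unfolding C2_on_def by (simp_all add: DERIV_deriv_iff_real_differentiable)

lemma geod_curv_radial:
  assumes "open I" "C2_on I u" "C2_on I v" "\<forall>s\<in>I. deriv v s = 0" "t \<in> I"
  shows "geod_curv u v t = 0"
proof -
  note du = C2_on_has_real_derivative(1)[OF assms(2)]
  have dv: "(v has_real_derivative 0) (at s)" if "s \<in> I" for s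
    using C2_on_has_real_derivative(1)[OF assms(3) that] assms(4) that by simp
  define T where "T = (\<lambda>s. vector [deriv u s * cosh (u s) * cos (v s),
      deriv u s * cosh (u s) * sin (v s), deriv u s * sinh (u s)] :: real^3)"
  define X where "X = (vector
      [deriv (deriv u) t * cosh (u t) * cos (v t) + (deriv u t)\<^sup>2 * sinh (u t) * cos (v t),
       deriv (deriv u) t * cosh (u t) * sin (v t) + (deriv u t)\<^sup>2 * sinh (u t) * sin (v t),
       deriv (deriv u) t * sinh (u t) + (deriv u t)\<^sup>2 * cosh (u t)] :: real^3)"
  have tangent_eq: "tangent u v s = T s" if "s \<in> I" for s
    using curve_has_vector_derivative[OF du[OF that] dv[OF that]]
    by (simp add: tangent_def T_def vector_derivative_at)
  \<comment> \<open>With e = (cosh u cos v, cosh u sin v, sinh u) we have T = u' e and X = u'' e + u'^2 gamma,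
    and the normal gamma x T is Lorentz-orthogonal to both e and gamma.\<close>
  have "(T has_vector_derivative X) (at t)"
    unfolding T_def X_def
    by (rule has_vector_derivative_vector3;
        (rule derivative_eq_intros C2_on_has_real_derivative[OF assms(2,5)] dv assms(5) refl)+;
        simp add: algebra_simps power2_eq_square)
  then have "(tangent u v has_vector_derivative X) (at t)"
    using has_vector_derivative_transform_within_open[OF _ assms(1,5)] tangent_eq by metis
  then show ?thesis
    unfolding geod_curv_def unit_normal_def tangent_eq[OF assms(5)]
    by (simp add: vector_derivative_at X_def T_def lor_def lcross_def curve_def Psi_def vector_3
        algebra_simps power2_eq_square)
qed

lemma alpha_stationary_conservation:
  assumes "is_interval I" "arc_length_on I u v" "alpha_stationary \<alpha> I u v"
  obtains C where "\<forall>t\<in>I. u t powr \<alpha> * (sinh (u t))\<^sup>2 * deriv v t = C"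
proof -
  have "\<exists>C. \<forall>t\<in>I. u t powr \<alpha> * (sinh (u t))\<^sup>2 * deriv v t / speed u v t = C"
    using assms(1,3) unfolding alpha_stationary_def
    by (intro has_field_derivative_zero_constant) (auto simp: is_interval_convex has_field_derivative_at_within)
  moreover have "speed u v t = 1" if "t \<in> I" for t
    using assms(2) that unfolding arc_length_on_def speed_def by simp
  ultimately show thesis
    using that by auto
qed

lemma conserved_quantity_nonzero:
  assumes "open I" "C2_on I u" "C2_on I v" "\<forall>t\<in>I. u t > 0"
    and "\<forall>t\<in>I. u t powr \<alpha> * (sinh (u t))\<^sup>2 * deriv v t = C"
    and "\<not> (\<exists>k. \<forall>t\<in>I. geod_curv u v t = k)"
  shows "C \<noteq> 0"
proof
  assume "C = 0"
  then have "\<forall>t\<in>I. deriv v t = 0"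
    using assms(4,5) by force
  then show False
    using geod_curv_radial[OF assms(1-3)] assms(6) by blast
qed

lemma sgn_constant_on_interval:
  fixes f :: "real \<Rightarrow> real"
  assumes "is_interval J" "continuous_on J f" "\<forall>t\<in>J. f t \<noteq> 0"
  obtains \<epsilon> where "\<epsilon> \<in> {-1, 1}" "\<forall>t\<in>J. sgn (f t) = \<epsilon>"
proof -
  have "is_interval (f ` J)"
    using assms(1,2) by (simp add: connected_continuous_image is_interval_connected is_interval_connected_1)
  have "(\<forall>t\<in>J. f t > 0) \<or> (\<forall>t\<in>J. f t < 0)"
  proof (rule ccontr)
    assume "\<not> ?thesis"
    then obtain a b where "a \<in> J" "b \<in> J" "f a \<le> 0" "0 \<le> f b"
      by (auto simp: not_less)
    with \<open>is_interval (f ` J)\<close> have "0 \<in> f ` J"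
      unfolding is_interval_1 by blast
    then show False
      using assms(3) by auto
  qed
  then show thesis
    using that[of 1] that[of "-1"] by auto
qed

lemma inj_on_if_deriv_nonzero:
  fixes f :: "real \<Rightarrow> real"
  assumes "is_interval J" "\<And>t. t \<in> J \<Longrightarrow> (f has_real_derivative f' t) (at t)"
    and "\<And>t. t \<in> J \<Longrightarrow> f' t \<noteq> 0"
  shows "inj_on f J"
proof -
  have "f a \<noteq> f b" if "a \<in> J" "b \<in> J" "a < b" for a b
  proof
    assume "f a = f b"
    have ab: "{a..b} \<subseteq> J"
      using mem_is_interval_1_I[OF assms(1) that(1,2)] by auto
    have "continuous_on {a..b} f"
      using ab assms(2) by (meson DERIV_isCont continuous_at_imp_continuous_on subsetD)
    moreover have "f differentiable at x" if "a < x" "x < b" for x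
    proof -
      have "x \<in> J"
        using ab that by auto
      then show ?thesis
        using assms(2) real_differentiable_def by blast
    qed
    ultimately obtain z where z: "a < z" "z < b" "(f has_real_derivative 0) (at z)"
      using Rolle[OF \<open>a < b\<close> \<open>f a = f b\<close>] by blast
    then have "z \<in> J"
      using ab by auto
    then show False
      using DERIV_unique[OF assms(2) z(3)] assms(3) by blast
  qed
  then show ?thesis
    by (intro inj_onI) (metis linorder_neqE_linordered_idom)
qed

lemma has_real_derivative_inv_into:
  fixes f :: "real \<Rightarrow> real"
  assumes "is_interval J" "open J" "\<And>t. t \<in> J \<Longrightarrow> (f has_real_derivative f' t) (at t)"
    and "\<And>t. t \<in> J \<Longrightarrow> f' t \<noteq> 0" "t \<in> J"
  shows "(inv_into J f has_real_derivative inverse (f' t)) (at (f t))"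
  unfolding has_field_derivative_def
proof (rule has_derivative_inverse_strong[OF assms(2,5)])
  show "continuous_on J f"
    using assms(3) by (meson DERIV_isCont continuous_at_imp_continuous_on)
  show "inv_into J f (f z) = z" if "z \<in> J" for z
    using inj_on_if_deriv_nonzero[OF assms(1,3,4)] that by simp
  show "(f has_derivative (*) (f' t)) (at t)"
    using assms(3,5) by (simp add: has_field_derivative_def)
  show "(*) (f' t) \<circ> (*) (inverse (f' t)) = id"
    using assms(4,5) by (auto simp: fun_eq_iff)
qed

lemma radial_derivatives_algebra:
  fixes P S C du dv :: real
  assumes "P > 0" "S > 0" "P * S * dv = C" "P\<^sup>2 * du\<^sup>2 = P\<^sup>2 - C\<^sup>2" "du \<noteq> 0"
  shows "C\<^sup>2 < P\<^sup>2"
    and "inverse du = sgn du * (P / sqrt (P\<^sup>2 - C\<^sup>2))"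
    and "dv * inverse du = sgn du * sgn C * (\<bar>C\<bar> / (S * sqrt (P\<^sup>2 - C\<^sup>2)))"
proof -
  have "P\<^sup>2 * du\<^sup>2 > 0"
    using assms(1,5) by simp
  then show "C\<^sup>2 < P\<^sup>2"
    using assms(4) by linarith
  have "sqrt (P\<^sup>2 - C\<^sup>2) = P * \<bar>du\<bar>"
    using assms(1,4) by (metis abs_of_pos power_mult_distrib real_sqrt_abs abs_mult)
  then show inv: "inverse du = sgn du * (P / sqrt (P\<^sup>2 - C\<^sup>2))"
    using assms(1,5) by (simp add: field_simps sgn_if)
  show "dv * inverse du = sgn du * sgn C * (\<bar>C\<bar> / (S * sqrt (P\<^sup>2 - C\<^sup>2)))"
    using assms(1,2,3) unfolding inv by (auto simp: field_simps sgn_if)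
qed

lemma inverse_radial_coordinate_has_derivative_at:
  assumes "is_interval J" "open J" "C2_on J u" "C2_on J v" "\<forall>t\<in>J. u t > 0"
    and "arc_length_on J u v"
    and conserved: "\<forall>t\<in>J. u t powr \<alpha> * (sinh (u t))\<^sup>2 * deriv v t = C"
    and "\<forall>t\<in>J. deriv u t \<noteq> 0" "t \<in> J"
  defines "P \<equiv> u t powr \<alpha> * sinh (u t)"
  shows "C\<^sup>2 < P\<^sup>2"
    and "(inv_into J u has_real_derivative sgn (deriv u t) * (P / sqrt (P\<^sup>2 - C\<^sup>2))) (at (u t))"
    and "((\<lambda>r. v (inv_into J u r)) has_real_derivative
           sgn (deriv u t) * sgn C * (\<bar>C\<bar> / (sinh (u t) * sqrt (P\<^sup>2 - C\<^sup>2)))) (at (u t))"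
proof -
  note du = C2_on_has_real_derivative(1)[OF assms(3)]
  have du_t: "deriv u t \<noteq> 0"
    using assms(8,9) by blast
  have P_pos: "P > 0" and sinh_pos: "sinh (u t) > 0"
    using assms(5,9) by (auto simp: P_def)
  have conserved_t: "P * sinh (u t) * deriv v t = C"
    using conserved assms(9) by (simp add: P_def power2_eq_square mult.assoc)
  have "P\<^sup>2 * (deriv u t)\<^sup>2 =
      P\<^sup>2 * ((deriv u t)\<^sup>2 + (sinh (u t))\<^sup>2 * (deriv v t)\<^sup>2) - (P * sinh (u t) * deriv v t)\<^sup>2"
    by (simp add: power_mult_distrib algebra_simps)
  then have speed_t: "P\<^sup>2 * (deriv u t)\<^sup>2 = P\<^sup>2 - C\<^sup>2"
    using assms(6,9) conserved_t unfolding arc_length_on_def by simp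
  note algebra = radial_derivatives_algebra[OF P_pos sinh_pos conserved_t speed_t du_t]
  show "C\<^sup>2 < P\<^sup>2"
    by (fact algebra(1))
  show inv: "(inv_into J u has_real_derivative sgn (deriv u t) * (P / sqrt (P\<^sup>2 - C\<^sup>2))) (at (u t))"
    using has_real_derivative_inv_into[OF assms(1,2) du] assms(8,9) algebra(2) by metis
  moreover have "inv_into J u (u t) = t"
    using inj_on_if_deriv_nonzero[OF assms(1) du] assms(8,9) by simp
  ultimately have "((\<lambda>r. v (inv_into J u r)) has_real_derivative
      deriv v t * (sgn (deriv u t) * (P / sqrt (P\<^sup>2 - C\<^sup>2)))) (at (u t))"
    using DERIV_chain2 C2_on_has_real_derivative(1)[OF assms(4,9)] by metis
  then show "((\<lambda>r. v (inv_into J u r)) has_real_derivative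
      sgn (deriv u t) * sgn C * (\<bar>C\<bar> / (sinh (u t) * sqrt (P\<^sup>2 - C\<^sup>2)))) (at (u t))"
    using algebra(2,3) by simp
qed

lemma inverse_radial_coordinate_derivatives:
  assumes "is_interval J" "open J" "C2_on J u" "C2_on J v" "\<forall>t\<in>J. u t > 0"
    and "arc_length_on J u v"
    and "\<forall>t\<in>J. u t powr \<alpha> * (sinh (u t))\<^sup>2 * deriv v t = C" "C \<noteq> 0"
    and "\<forall>t\<in>J. deriv u t \<noteq> 0"
  shows "\<exists>\<epsilon>1 \<epsilon>2. \<epsilon>1 \<in> {-1, 1} \<and> \<epsilon>2 \<in> {-1, 1} \<and>
           (\<forall>s\<in>u ` J.
              \<bar>C\<bar>\<^sup>2 < s powr (2 * \<alpha>) * (sinh s)\<^sup>2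
            \<and> (inv_into J u has_real_derivative
                 \<epsilon>1 * (s powr \<alpha> * sinh s / sqrt (s powr (2 * \<alpha>) * (sinh s)\<^sup>2 - \<bar>C\<bar>\<^sup>2))) (at s)
            \<and> ((\<lambda>r. v (inv_into J u r)) has_real_derivative
                 \<epsilon>2 * (\<bar>C\<bar> / (sinh s * sqrt (s powr (2 * \<alpha>) * (sinh s)\<^sup>2 - \<bar>C\<bar>\<^sup>2)))) (at s))"
proof -
  have "continuous_on J (deriv u)"
    using C2_on_has_real_derivative(2)[OF assms(3)]
    by (meson DERIV_isCont continuous_at_imp_continuous_on)
  then obtain \<epsilon>1 where \<epsilon>1: "\<epsilon>1 \<in> {-1, 1}" "\<forall>t\<in>J. sgn (deriv u t) = \<epsilon>1"
    using sgn_constant_on_interval assms(1,9) by blast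
  have "s powr (2 * \<alpha>) * (sinh s)\<^sup>2 = (s powr \<alpha> * sinh s)\<^sup>2" for s
    by (simp add: power_mult_distrib powr_powr[symmetric] mult.commute)
  moreover have "\<epsilon>1 * sgn C \<in> {-1, 1}"
    using \<epsilon>1(1) \<open>C \<noteq> 0\<close> by (auto simp: sgn_if)
  ultimately show ?thesis
    using inverse_radial_coordinate_has_derivative_at[OF assms(1-7,9)] \<epsilon>1
    by (intro exI[of _ \<epsilon>1] exI[of _ "\<epsilon>1 * sgn C"]) simp
qed

theorem theorem2p9:
  fixes \<alpha> :: real and I :: "real set" and u v :: "real \<Rightarrow> real"
  assumes "\<alpha> \<noteq> 0"
    and "is_interval I" and "open I" and "I \<noteq> {}"
    and "C2_on I u" and "C2_on I v"
    and "\<forall>t\<in>I. u t > 0"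
    and "arc_length_on I u v"
    and "alpha_stationary \<alpha> I u v"
    and "\<not> (\<exists>k. \<forall>t\<in>I. geod_curv u v t = k)"
  shows "\<exists>c>0. \<forall>J. is_interval J \<and> open J \<and> J \<subseteq> I \<and> (\<forall>t\<in>J. deriv u t \<noteq> 0) \<longrightarrow>
           (\<exists>\<epsilon>1 \<epsilon>2. \<epsilon>1 \<in> {-1, 1} \<and> \<epsilon>2 \<in> {-1, 1} \<and>
              (\<forall>s\<in>u ` J.
                 c\<^sup>2 < s powr (2 * \<alpha>) * (sinh s)\<^sup>2
               \<and> (inv_into J u has_real_derivative
                    \<epsilon>1 * (s powr \<alpha> * sinh s / sqrt (s powr (2 * \<alpha>) * (sinh s)\<^sup>2 - c\<^sup>2))) (at s)
               \<and> ((\<lambda>r. v (inv_into J u r)) has_real_derivative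
                    \<epsilon>2 * (c / (sinh s * sqrt (s powr (2 * \<alpha>) * (sinh s)\<^sup>2 - c\<^sup>2)))) (at s)))"
proof -
  obtain C where conserved: "\<forall>t\<in>I. u t powr \<alpha> * (sinh (u t))\<^sup>2 * deriv v t = C"
    using alpha_stationary_conservation[OF assms(2,8,9)] .
  have "C \<noteq> 0"
    using conserved_quantity_nonzero[OF assms(3,5,6,7) conserved assms(10)] .
  show ?thesis
  proof (rule exI[of _ "\<bar>C\<bar>"], intro conjI allI impI, goal_cases)
    case 1
    show ?case
      using \<open>C \<noteq> 0\<close> by simp
  next
    case (2 J)
    then have J: "is_interval J" "open J" "J \<subseteq> I" "\<forall>t\<in>J. deriv u t \<noteq> 0"
      by auto
    have on_J: "C2_on J u" "C2_on J v" "\<forall>t\<in>J. u t > 0" "arc_length_on J u v"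
        "\<forall>t\<in>J. u t powr \<alpha> * (sinh (u t))\<^sup>2 * deriv v t = C"
      using J(3) assms(5-8) conserved by (auto simp: C2_on_def arc_length_on_def)
    show ?case
      by (rule inverse_radial_coordinate_derivatives[OF J(1,2) on_J \<open>C \<noteq> 0\<close> J(4)])
  qed
qed

end
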